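(* Let $(G,S)$ and $(H,S)$ be two compatible $d$-labeled boundaried graphs such that $\mathbf{Aux}(G,S)\oplus\mathbf{Aux}(H,S)$ has no cycles. If $F$ is an $S$-block of $(G,S)\oplus(H,S)$, then $\mathbf{Aux}(F\cap G,S\cap V(F))\oplus\mathbf{Aux}(F\cap H,S\cap V(F))$ has no cycles.
   Context: A block of a graph is a maximal connected subgraph without a cut vertex. A block $d$-labeling of a graph whose blocks have at most $d$ vertices is a map $V(G)\to[d]$ injective on each block; a $d$-labeled boundaried graph is a pair $(G,S)$ with $S\subseteq V(G)$ and $G$ carrying such a labeling. $(G,S)$ and $(H,S)$ are compatible if $V(G-S)\cap V(H-S)=\emptyset$, $G[S]=H[S]$, and labels agree on $S$. The sum $(G,S)\oplus(H,S)$ is the graph obtained from the disjoint union of $G$ and $H$ by identifying corresponding vertices of $S$ and removing duplicate edges inside $S$. An $S$-block of a graph containing $S$ is a block of it containing an edge of $G[S]$. For graphs $G_1,G_2$, $G_1\cap G_2$ is the graph with vertex set $V(G_1)\cap V(G_2)$ and edge set $E(G_1)\cap E(G_2)$. For a boundaried graph $(G,S)$, $\mathbf{Aux}(G,S)$ is the bipartite graph whose vertices are the connected components of $G$ and the connected components of $G[S]$, a component $C_1$ of $G$ adjacent to a component $C_2$ of $G[S]$ iff $C_2\subseteq C_1$; for two boundaried graphs with the same boundary graph, $\mathbf{Aux}(G,S)\oplus\mathbf{Aux}(H,S)$ is the disjoint union of $\mathbf{Aux}(G,S)$ and $\mathbf{Aux}(H,S)$ with the vertices corresponding to the same component of the boundary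 graph identified. *)

theory Defs
  imports Main
begin

type_synonym 'a graph = "'a set \<times> 'a set set"

definition verts :: "'a graph \<Rightarrow> 'a set" where "verts G = fst G"
definition edges :: "'a graph \<Rightarrow> 'a set set" where "edges G = snd G"

definition wf_graph :: "'a graph \<Rightarrow> bool" where
  "wf_graph G \<longleftrightarrow> finite (verts G) \<and>
     (\<forall>e\<in>edges G. \<exists>u v. e = {u, v} \<and> u \<noteq> v \<and> u \<in> verts G \<and> v \<in> verts G)"

definition adj :: "'a graph \<Rightarrow> 'a \<Rightarrow> 'a \<Rightarrow> bool" where
  "adj G u v \<longleftrightarrow> {u, v} \<in> edges G"

definition subgraph :: "'a graph \<Rightarrow> 'a graph \<Rightarrow> bool" where
  "subgraph H G \<longleftrightarrow> wf_graph H \<and> verts H \<subseteq> verts G \<and> edges H \<subseteq> edges G"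

definition induced :: "'a graph \<Rightarrow> 'a set \<Rightarrow> 'a graph" where
  "induced G S = (verts G \<inter> S, {e \<in> edges G. e \<subseteq> S})"

definition del_vert :: "'a graph \<Rightarrow> 'a \<Rightarrow> 'a graph" where
  "del_vert G v = (verts G - {v}, {e \<in> edges G. v \<notin> e})"

definition del_verts :: "'a graph \<Rightarrow> 'a set \<Rightarrow> 'a graph" where
  "del_verts G S = (verts G - S, {e \<in> edges G. e \<inter> S = {}})"

definition conn_comp :: "'a graph \<Rightarrow> 'a \<Rightarrow> 'a set" where
  "conn_comp G v = {u \<in> verts G. (adj G)\<^sup>*\<^sup>* v u}"

definition comps :: "'a graph \<Rightarrow> 'a set set" where
  "comps G = conn_comp G ` verts G"

definition connected_graph :: "'a graph \<Rightarrow> bool" where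
  "connected_graph G \<longleftrightarrow> verts G \<noteq> {} \<and> (\<forall>u\<in>verts G. \<forall>v\<in>verts G. (adj G)\<^sup>*\<^sup>* u v)"

definition cut_vertex :: "'a graph \<Rightarrow> 'a \<Rightarrow> bool" where
  "cut_vertex G v \<longleftrightarrow> v \<in> verts G \<and> card (comps (del_vert G v)) > card (comps G)"

definition biconn_piece :: "'a graph \<Rightarrow> bool" where
  "biconn_piece B \<longleftrightarrow> connected_graph B \<and> (\<forall>v. \<not> cut_vertex B v)"

definition is_block :: "'a graph \<Rightarrow> 'a graph \<Rightarrow> bool" where
  "is_block G B \<longleftrightarrow> subgraph B G \<and> biconn_piece B \<and>
     (\<forall>B'. subgraph B' G \<and> biconn_piece B' \<and> subgraph B B' \<longrightarrow> B' = B)"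

definition block_labeling :: "nat \<Rightarrow> 'a graph \<Rightarrow> ('a \<Rightarrow> nat) \<Rightarrow> bool" where
  "block_labeling d G lab \<longleftrightarrow> lab ` verts G \<subseteq> {1..d} \<and>
     (\<forall>B. is_block G B \<longrightarrow> card (verts B) \<le> d \<and> inj_on lab (verts B))"

definition labeled_boundaried :: "nat \<Rightarrow> 'a graph \<Rightarrow> 'a set \<Rightarrow> ('a \<Rightarrow> nat) \<Rightarrow> bool" where
  "labeled_boundaried d G S lab \<longleftrightarrow> wf_graph G \<and> S \<subseteq> verts G \<and> block_labeling d G lab"

definition compatible ::
  "'a graph \<Rightarrow> ('a \<Rightarrow> nat) \<Rightarrow> 'a graph \<Rightarrow> ('a \<Rightarrow> nat) \<Rightarrow> 'a set \<Rightarrow> bool" where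
  "compatible G lg H lh S \<longleftrightarrow>
     verts (del_verts G S) \<inter> verts (del_verts H S) = {} \<and>
     induced G S = induced H S \<and> (\<forall>x\<in>S. lg x = lh x)"

text \<open>Sum of compatible boundaried graphs: vertices of S are shared by name, the other
  vertices are disjoint, so the sum is the union of the graphs.\<close>
definition gsum :: "'a graph \<Rightarrow> 'a graph \<Rightarrow> 'a graph" where
  "gsum G H = (verts G \<union> verts H, edges G \<union> edges H)"

definition ginter :: "'a graph \<Rightarrow> 'a graph \<Rightarrow> 'a graph" where
  "ginter G H = (verts G \<inter> verts H, edges G \<inter> edges H)"

definition S_block :: "'a graph \<Rightarrow> 'a set \<Rightarrow> 'a graph \<Rightarrow> bool" where
  "S_block G S F \<longleftrightarrow> is_block G F \<and> edges F \<inter> edges (induced G S) \<noteq> {}"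

text \<open>Vertices of Aux(G,S) (+) Aux(H,S): components of G, components of H, and the
  (shared) components of the common boundary graph.\<close>
datatype 'a auxv = GComp "'a set" | HComp "'a set" | BComp "'a set"

definition aux_sum :: "'a graph \<Rightarrow> 'a graph \<Rightarrow> 'a set \<Rightarrow> 'a auxv graph" where
  "aux_sum G H S =
    (GComp ` comps G \<union> HComp ` comps H \<union> BComp ` comps (induced G S),
     {{GComp C1, BComp C2} | C1 C2. C1 \<in> comps G \<and> C2 \<in> comps (induced G S) \<and> C2 \<subseteq> C1} \<union>
     {{HComp C1, BComp C2} | C1 C2. C1 \<in> comps H \<and> C2 \<in> comps (induced H S) \<and> C2 \<subseteq> C1})"

definition has_cycle :: "'a graph \<Rightarrow> bool" where
  "has_cycle G \<longleftrightarrow> (\<exists>vs. length vs \<ge> 3 \<and> distinct vs \<and> set vs \<subseteq> verts G \<and>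
     (\<forall>i < length vs. {vs ! i, vs ! ((i + 1) mod length vs)} \<in> edges G))"

end

theory Submission
  imports Defs "HOL-Library.Transitive_Closure_Table"
begin

text \<open>A block \<open>F\<close> of \<open>K = G \<union> H\<close> absorbs every path of \<open>K\<close> between two of its
  vertices: adding the path to \<open>F\<close> as an ear keeps it connected and free of cut vertices, so
  maximality forces the path into \<open>F\<close>. Hence two vertices of \<open>F\<close> that are connected in \<open>G\<close>
  (in \<open>H\<close>, in the boundary graph) are already connected in \<open>F \<inter> G\<close> (in \<open>F \<inter> H\<close>, in the
  boundary graph of \<open>F\<close>). Sending each component of the restricted graphs to the component
  of the original graph containing it is therefore injective and maps edges of the restricted
  Aux-sum to edges of \<open>Aux(G,S) \<oplus> Aux(H,S)\<close>, so it maps a cycle to a cycle.\<close>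

lemma verts_pair [simp]: "verts (V, E) = V"
  by (simp add: verts_def)

lemma edges_pair [simp]: "edges (V, E) = E"
  by (simp add: edges_def)

lemma wf_graph_edge_subset: "wf_graph G \<Longrightarrow> e \<in> edges G \<Longrightarrow> e \<subseteq> verts G"
  unfolding wf_graph_def by fastforce

lemma wf_graph_gsum: "wf_graph G \<Longrightarrow> wf_graph H \<Longrightarrow> wf_graph (gsum G H)"
  unfolding wf_graph_def gsum_def by fastforce

lemma symp_adj: "symp (adj G)"
  by (rule sympI) (simp add: adj_def insert_commute)

lemma reach_sym: "(adj G)\<^sup>*\<^sup>* u v \<Longrightarrow> (adj G)\<^sup>*\<^sup>* v u"
  by (rule sympD[OF symp_rtranclp[OF symp_adj]])

lemma reach_mono:
  assumes "edges G \<subseteq> edges H" "(adj G)\<^sup>*\<^sup>* u v"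
  shows "(adj H)\<^sup>*\<^sup>* u v"
proof -
  have "adj G \<le> adj H"
    using assms(1) by (auto simp: adj_def)
  then show ?thesis
    using assms(2) by (rule predicate2D[OF rtranclp_mono])
qed

lemma rtranclp_chain:
  assumes "i \<le> k" and "\<And>j. i \<le> j \<Longrightarrow> j < k \<Longrightarrow> R (p j) (p (Suc j))"
  shows "R\<^sup>*\<^sup>* (p i) (p k)"
  using assms(1)
proof (induction rule: inc_induct)
  case (step n)
  then show ?case
    using assms(2)[of n] by (simp add: converse_rtranclp_into_rtranclp)
qed simp

lemma rtranclp_simple_chain:
  assumes "R\<^sup>*\<^sup>* u v"
  obtains p k where "p 0 = u" "p k = v" "inj_on p {0..k}" "\<And>i. i < k \<Longrightarrow> R (p i) (p (Suc i))"
proof -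
  obtain ys where path: "rtrancl_path R u ys v" and dist: "distinct (u # ys)"
    using assms rtrancl_path_distinct rtranclp_eq_rtrancl_path by metis
  let ?p = "(!) (u # ys)"
  have "?p (length ys) = v"
  proof (cases "ys = []")
    case True
    then show ?thesis
      using path by (auto elim: rtrancl_path.cases)
  next
    case False
    then show ?thesis
      using rtrancl_path_last[OF path False] by (cases ys rule: rev_cases) (auto simp: nth_append)
  qed
  moreover have "inj_on ?p {0..length ys}"
    using dist by (auto simp: inj_on_def nth_eq_iff_index_eq)
  moreover have "R (?p i) (?p (Suc i))" if "i < length ys" for i
    using rtrancl_path_nth[OF path that] by simp
  ultimately show thesis using that[of ?p "length ys"] by simp
qed

definition all_linked :: "'a graph \<Rightarrow> bool" where
  "all_linked G \<longleftrightarrow> (\<forall>u\<in>verts G. \<forall>v\<in>verts G. (adj G)\<^sup>*\<^sup>* u v)"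

lemma connected_graph_iff_all_linked: "connected_graph G \<longleftrightarrow> verts G \<noteq> {} \<and> all_linked G"
  by (simp add: connected_graph_def all_linked_def)

lemma all_linked_via_subset:
  assumes "\<forall>u\<in>T. \<forall>v\<in>T. (adj G)\<^sup>*\<^sup>* u v" and "\<forall>y\<in>verts G. \<exists>t\<in>T. (adj G)\<^sup>*\<^sup>* y t"
  shows "all_linked G"
  unfolding all_linked_def by (meson assms reach_sym rtranclp_trans)

lemma conn_comp_eq: "u \<in> conn_comp G w \<Longrightarrow> conn_comp G u = conn_comp G w"
  unfolding conn_comp_def by (auto intro: rtranclp_trans reach_sym)

lemma conn_comp_in_comps: "u \<in> verts G \<Longrightarrow> conn_comp G u \<in> comps G"
  by (simp add: comps_def)

lemma card_comps_le_one_iff_all_linked: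
  assumes "finite (verts G)"
  shows "card (comps G) \<le> 1 \<longleftrightarrow> all_linked G"
proof
  assume "card (comps G) \<le> 1"
  moreover have "finite (comps G)"
    using assms by (simp add: comps_def)
  ultimately have "\<forall>C\<in>comps G. \<forall>C'\<in>comps G. C = C'"
    by (simp add: card_le_Suc0_iff_eq)
  then have one: "conn_comp G u = conn_comp G v" if "u \<in> verts G" "v \<in> verts G" for u v
    using that conn_comp_in_comps[of u G] conn_comp_in_comps[of v G] by blast
  show "all_linked G"
    unfolding all_linked_def
  proof (intro ballI)
    fix u v assume "u \<in> verts G" "v \<in> verts G"
    then have "v \<in> conn_comp G v"
      by (simp add: conn_comp_def)
    then have "v \<in> conn_comp G u"
      using one[OF \<open>u \<in> verts G\<close> \<open>v \<in> verts G\<close>] by simp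
    then show "(adj G)\<^sup>*\<^sup>* u v"
      by (simp add: conn_comp_def)
  qed
next
  assume "all_linked G"
  then have "comps G \<subseteq> {verts G}"
    by (auto simp: all_linked_def comps_def conn_comp_def)
  then show "card (comps G) \<le> 1"
    using card_mono[of "{verts G}"] by fastforce
qed

lemma del_vert_absent: "wf_graph G \<Longrightarrow> x \<notin> verts G \<Longrightarrow> del_vert G x = G"
  unfolding del_vert_def wf_graph_def by (auto simp: prod_eq_iff verts_def edges_def)

lemma biconn_piece_iff:
  assumes "wf_graph G"
  shows "biconn_piece G \<longleftrightarrow> connected_graph G \<and> (\<forall>x. all_linked (del_vert G x))"
proof (cases "connected_graph G")
  case conn: True
  then have comps: "comps G = {verts G}"
    by (auto simp: connected_graph_def comps_def conn_comp_def)
  have "\<not> cut_vertex G x \<longleftrightarrow> all_linked (del_vert G x)" for x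
  proof (cases "x \<in> verts G")
    case True
    then have "\<not> cut_vertex G x \<longleftrightarrow> card (comps (del_vert G x)) \<le> 1"
      using comps by (simp add: cut_vertex_def not_less)
    also have "\<dots> \<longleftrightarrow> all_linked (del_vert G x)"
      using assms by (intro card_comps_le_one_iff_all_linked) (simp add: wf_graph_def del_vert_def)
    finally show ?thesis .
  next
    case False
    then show ?thesis
      using conn del_vert_absent[OF assms False]
      by (simp add: cut_vertex_def connected_graph_iff_all_linked)
  qed
  then show ?thesis
    by (simp add: biconn_piece_def)
qed (simp add: biconn_piece_def)

lemma chain_reaches_end_avoiding:
  assumes inj: "inj_on p {0..k}" and "i \<le> k" "p i \<noteq> x" and "symp R"
    and step: "\<And>j. j < k \<Longrightarrow> p j \<noteq> x \<Longrightarrow> p (Suc j) \<noteq> x \<Longrightarrow> R (p j) (p (Suc j))"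
  shows "p 0 \<noteq> x \<and> R\<^sup>*\<^sup>* (p i) (p 0) \<or> p k \<noteq> x \<and> R\<^sup>*\<^sup>* (p i) (p k)"
proof (cases "x \<in> p ` {0..<i}")
  case False
  then have avoid: "p j \<noteq> x" if "j \<le> i" for j
    using \<open>p i \<noteq> x\<close> that by (cases "j = i") auto
  then have "R\<^sup>*\<^sup>* (p 0) (p i)"
    using \<open>i \<le> k\<close> by (intro rtranclp_chain step avoid) auto
  then have "R\<^sup>*\<^sup>* (p i) (p 0)"
    by (rule sympD[OF symp_rtranclp[OF \<open>symp R\<close>]])
  moreover have "p 0 \<noteq> x"
    using avoid by simp
  ultimately show ?thesis
    by blast
next
  case True
  then obtain j where "j < i" "x = p j"
    by auto
  then have avoid: "p m \<noteq> x" if "i \<le> m" "m \<le> k" for m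
    using inj_onD[OF inj, of m j] that \<open>i \<le> k\<close> by auto
  then have "R\<^sup>*\<^sup>* (p i) (p k)"
    using \<open>i \<le> k\<close> by (intro rtranclp_chain step) auto
  then show ?thesis
    using avoid \<open>i \<le> k\<close> by blast
qed

definition add_path :: "'a graph \<Rightarrow> (nat \<Rightarrow> 'a) \<Rightarrow> nat \<Rightarrow> 'a graph" where
  "add_path G p k = (verts G \<union> p ` {0..k}, edges G \<union> {{p j, p (Suc j)} | j. j < k})"

lemma adj_add_path: "j < k \<Longrightarrow> adj (add_path G p k) (p j) (p (Suc j))"
  by (auto simp: adj_def add_path_def)

lemma wf_graph_add_path:
  assumes "wf_graph G" "inj_on p {0..k}"
  shows "wf_graph (add_path G p k)"
proof -
  have "\<exists>u v. e = {u, v} \<and> u \<noteq> v \<and> u \<in> verts (add_path G p k) \<and> v \<in> verts (add_path G p k)"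
    if e: "e \<in> edges (add_path G p k)" for e
  proof -
    consider "e \<in> edges G" | j where "j < k" "e = {p j, p (Suc j)}"
      using e unfolding add_path_def by auto
    then show ?thesis
    proof cases
      case 1
      then obtain u v where "e = {u, v}" "u \<noteq> v" "u \<in> verts G" "v \<in> verts G"
        using assms(1) unfolding wf_graph_def by blast
      then show ?thesis
        by (intro exI[of _ u] exI[of _ v]) (simp add: add_path_def)
    next
      case (2 j)
      have "p j \<noteq> p (Suc j)"
        using inj_onD[OF assms(2), of j "Suc j"] \<open>j < k\<close> by auto
      then show ?thesis
        using 2 by (intro exI[of _ "p j"] exI[of _ "p (Suc j)"]) (simp add: add_path_def)
    qed
  qed
  then show ?thesis
    using assms(1) by (simp add: wf_graph_def add_path_def)
qed

lemma biconn_piece_add_path: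
  assumes wf: "wf_graph G" and bp: "biconn_piece G" and inj: "inj_on p {0..k}"
    and ends: "p 0 \<in> verts G" "p k \<in> verts G"
  shows "biconn_piece (add_path G p k)"
proof -
  let ?P = "add_path G p k"
  have G_linked: "all_linked (del_vert G x)" "all_linked G" for x
    using bp wf by (simp_all add: biconn_piece_iff connected_graph_iff_all_linked)
  have edges_le: "edges G \<subseteq> edges ?P" "edges (del_vert G x) \<subseteq> edges (del_vert ?P x)" for x
    by (auto simp: add_path_def del_vert_def)
  have vertex_cases: "y \<in> verts G \<or> (\<exists>i\<le>k. y = p i)" if "y \<in> verts ?P" for y
    using that by (auto simp: add_path_def)
  have "all_linked ?P"
  proof (rule all_linked_via_subset[where T = "verts G"])
    show "\<forall>u\<in>verts G. \<forall>v\<in>verts G. (adj ?P)\<^sup>*\<^sup>* u v"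
      using G_linked(2) reach_mono[OF edges_le(1)] by (auto simp: all_linked_def)
    have "(adj ?P)\<^sup>*\<^sup>* (p i) (p 0)" if "i \<le> k" for i
      using that by (intro reach_sym[OF rtranclp_chain] adj_add_path) auto
    then show "\<forall>y\<in>verts ?P. \<exists>t\<in>verts G. (adj ?P)\<^sup>*\<^sup>* y t"
      using vertex_cases ends by blast
  qed
  moreover have "all_linked (del_vert ?P x)" for x
  proof (rule all_linked_via_subset[where T = "verts G - {x}"])
    show "\<forall>u\<in>verts G - {x}. \<forall>v\<in>verts G - {x}. (adj (del_vert ?P x))\<^sup>*\<^sup>* u v"
      using G_linked(1) reach_mono[OF edges_le(2)] by (auto simp: all_linked_def del_vert_def)
    have path: "adj (del_vert ?P x) (p j) (p (Suc j))"
      if "j < k" "p j \<noteq> x" "p (Suc j) \<noteq> x" for j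
      using adj_add_path[of j k G p] that by (auto simp: adj_def del_vert_def)
    show "\<forall>y\<in>verts (del_vert ?P x). \<exists>t\<in>verts G - {x}. (adj (del_vert ?P x))\<^sup>*\<^sup>* y t"
    proof
      fix y assume "y \<in> verts (del_vert ?P x)"
      then have "y \<noteq> x" "y \<in> verts ?P"
        by (auto simp: del_vert_def)
      then consider "y \<in> verts G" | i where "i \<le> k" "y = p i"
        using vertex_cases by blast
      then show "\<exists>t\<in>verts G - {x}. (adj (del_vert ?P x))\<^sup>*\<^sup>* y t"
      proof cases
        case 1
        with \<open>y \<noteq> x\<close> show ?thesis
          by blast
      next
        case (2 i)
        with chain_reaches_end_avoiding[OF inj \<open>i \<le> k\<close> _ symp_adj path] \<open>y \<noteq> x\<close> ends
        show ?thesis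
          by blast
      qed
    qed
  qed
  ultimately show ?thesis
    using wf_graph_add_path[OF wf inj] ends
    by (auto simp: biconn_piece_iff connected_graph_iff_all_linked add_path_def)
qed

lemma block_contains_path:
  assumes wfK: "wf_graph K" and blk: "is_block K F" and inj: "inj_on p {0..k}"
    and ends: "p 0 \<in> verts F" "p k \<in> verts F"
    and path: "\<And>j. j < k \<Longrightarrow> {p j, p (Suc j)} \<in> edges K"
    and "i < k"
  shows "{p i, p (Suc i)} \<in> edges F"
proof -
  have sub: "subgraph F K" and bp: "biconn_piece F"
    using blk by (simp_all add: is_block_def)
  then have wf: "wf_graph F"
    by (simp add: subgraph_def)
  have "p j \<in> verts K" if "j \<le> k" for j
    using that ends sub path wf_graph_edge_subset[OF wfK]
    by (cases "j = k") (auto simp: subgraph_def less_le)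
  then have "subgraph (add_path F p k) K"
    using sub path wf_graph_add_path[OF wf inj] by (auto simp: subgraph_def add_path_def)
  moreover have "subgraph F (add_path F p k)"
    using wf by (auto simp: subgraph_def add_path_def)
  moreover have "\<forall>B. subgraph B K \<and> biconn_piece B \<and> subgraph F B \<longrightarrow> B = F"
    using blk unfolding is_block_def by blast
  ultimately have "add_path F p k = F"
    using biconn_piece_add_path[OF wf bp inj ends] by blast
  moreover have "{p i, p (Suc i)} \<in> edges (add_path F p k)"
    using \<open>i < k\<close> by (auto simp: add_path_def)
  ultimately show ?thesis
    by simp
qed

lemma reach_within_block:
  assumes wfK: "wf_graph K" and blk: "is_block K F" and sub: "edges G \<subseteq> edges K"
    and "u \<in> verts F" "v \<in> verts F" "(adj G)\<^sup>*\<^sup>* u v"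
  shows "(adj (ginter F G))\<^sup>*\<^sup>* u v"
proof -
  obtain p k where ends: "p 0 = u" "p k = v" and inj: "inj_on p {0..k}"
    and path: "\<And>i. i < k \<Longrightarrow> adj G (p i) (p (Suc i))"
    using rtranclp_simple_chain[OF \<open>(adj G)\<^sup>*\<^sup>* u v\<close>] by blast
  have "{p j, p (Suc j)} \<in> edges K" if "j < k" for j
    using path[OF that] sub by (auto simp: adj_def)
  then have "{p i, p (Suc i)} \<in> edges F" if "i < k" for i
    using block_contains_path[OF wfK blk inj] ends that \<open>u \<in> verts F\<close> \<open>v \<in> verts F\<close>
    by blast
  then have "(adj (ginter F G))\<^sup>*\<^sup>* (p 0) (p k)"
    using path by (intro rtranclp_chain) (auto simp: adj_def ginter_def)
  then show ?thesis
    using ends by simp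
qed

definition faithful_subgraph :: "'a graph \<Rightarrow> 'a graph \<Rightarrow> bool" where
  "faithful_subgraph A G \<longleftrightarrow> verts A \<subseteq> verts G \<and> edges A \<subseteq> edges G \<and>
     (\<forall>u\<in>verts A. \<forall>v\<in>verts A. (adj G)\<^sup>*\<^sup>* u v \<longrightarrow> (adj A)\<^sup>*\<^sup>* u v)"

lemma faithful_subgraph_block_inter:
  assumes "wf_graph K" "is_block K F" "edges G \<subseteq> edges K"
  shows "faithful_subgraph (ginter F G) G"
  unfolding faithful_subgraph_def
proof (intro conjI ballI impI)
  fix u v assume "u \<in> verts (ginter F G)" "v \<in> verts (ginter F G)" "(adj G)\<^sup>*\<^sup>* u v"
  then show "(adj (ginter F G))\<^sup>*\<^sup>* u v"
    by (intro reach_within_block[OF assms]) (simp_all add: ginter_def)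
qed (auto simp: ginter_def)

lemma induced_ginter:
  assumes "wf_graph F"
  shows "induced (ginter F G) (S \<inter> verts F) = ginter F (induced G S)"
  using wf_graph_edge_subset[OF assms] by (auto simp: induced_def ginter_def)

lemma induced_subset: "verts (induced G S) \<subseteq> verts G" "edges (induced G S) \<subseteq> edges G"
  by (auto simp: induced_def)

lemma comps_memberD:
  assumes "C \<in> comps A" "u \<in> C"
  shows "u \<in> verts A" "C = conn_comp A u"
proof -
  obtain w where "C = conn_comp A w"
    using assms(1) by (auto simp: comps_def)
  with assms(2) show "u \<in> verts A" "C = conn_comp A u"
    using conn_comp_eq[of u A w] by (simp_all add: conn_comp_def)
qed

lemma comps_nonempty: "C \<in> comps A \<Longrightarrow> C \<noteq> {}"
  by (auto simp: comps_def conn_comp_def)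

lemma conn_comp_mono:
  assumes "verts A \<subseteq> verts G" "edges A \<subseteq> edges G"
  shows "conn_comp A u \<subseteq> conn_comp G u"
  using assms reach_mono[OF assms(2)] by (auto simp: conn_comp_def)

definition comp_in :: "'a graph \<Rightarrow> 'a set \<Rightarrow> 'a set" where
  "comp_in G C = conn_comp G (SOME u. u \<in> C)"

lemma comp_in_eq:
  assumes "C \<in> comps A" "verts A \<subseteq> verts G" "edges A \<subseteq> edges G" "u \<in> C"
  shows "comp_in G C = conn_comp G u"
proof -
  have "C \<subseteq> conn_comp G u"
    using comps_memberD(2)[OF assms(1,4)] conn_comp_mono[OF assms(2,3)] by simp
  moreover have "(SOME u. u \<in> C) \<in> C"
    using assms(4) by (rule someI)
  ultimately show ?thesis
    unfolding comp_in_def by (intro conn_comp_eq) blast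
qed

lemma comp_in_comps:
  assumes "C \<in> comps A" "verts A \<subseteq> verts G" "edges A \<subseteq> edges G"
  shows "comp_in G C \<in> comps G"
proof -
  obtain u where "u \<in> C"
    using comps_nonempty[OF assms(1)] by blast
  then have "comp_in G C = conn_comp G u" "u \<in> verts G"
    using comp_in_eq[OF assms \<open>u \<in> C\<close>] comps_memberD(1)[OF assms(1) \<open>u \<in> C\<close>] assms(2)
    by auto
  then show ?thesis
    by (simp add: conn_comp_in_comps)
qed

lemma inj_on_comp_in:
  assumes "faithful_subgraph A G"
  shows "inj_on (comp_in G) (comps A)"
proof (rule inj_onI)
  fix C C' assume C: "C \<in> comps A" and C': "C' \<in> comps A" and eq: "comp_in G C = comp_in G C'"
  obtain u u' where u: "u \<in> C" and u': "u' \<in> C'"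
    using comps_nonempty C C' by blast
  have sub: "verts A \<subseteq> verts G" "edges A \<subseteq> edges G"
    and reach: "\<forall>u\<in>verts A. \<forall>v\<in>verts A. (adj G)\<^sup>*\<^sup>* u v \<longrightarrow> (adj A)\<^sup>*\<^sup>* u v"
    using assms by (simp_all add: faithful_subgraph_def)
  have uA: "u \<in> verts A" and u'A: "u' \<in> verts A"
    using comps_memberD(1)[OF C u] comps_memberD(1)[OF C' u'] .
  have "u' \<in> conn_comp G u'"
    using u'A sub(1) by (auto simp: conn_comp_def)
  also have "conn_comp G u' = conn_comp G u"
    using eq comp_in_eq[OF C sub u] comp_in_eq[OF C' sub u'] by simp
  finally have "(adj G)\<^sup>*\<^sup>* u u'"
    by (simp add: conn_comp_def)
  then have "u' \<in> conn_comp A u"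
    using reach uA u'A by (simp add: conn_comp_def)
  then show "C = C'"
    using comps_memberD(2)[OF C u] comps_memberD(2)[OF C' u'] conn_comp_eq by metis
qed

lemma comp_in_mono:
  assumes "C1 \<in> comps A" "verts A \<subseteq> verts G" "edges A \<subseteq> edges G"
    and "C2 \<in> comps B'" "verts B' \<subseteq> verts B" "edges B' \<subseteq> edges B"
    and "verts B \<subseteq> verts G" "edges B \<subseteq> edges G" and "C2 \<subseteq> C1"
  shows "comp_in B C2 \<subseteq> comp_in G C1"
proof -
  obtain u where u: "u \<in> C2"
    using comps_nonempty[OF assms(4)] by blast
  have "comp_in B C2 = conn_comp B u"
    using comp_in_eq[OF assms(4,5,6) u] .
  also have "\<dots> \<subseteq> conn_comp G u"
    using conn_comp_mono[OF assms(7,8)] .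
  also have "\<dots> = comp_in G C1"
    using comp_in_eq[OF assms(1,2,3)] u assms(9) by auto
  finally show ?thesis .
qed

lemma has_cycle_inj_hom:
  assumes "has_cycle A" and inj: "inj_on f (verts A)" and verts: "f ` verts A \<subseteq> verts B"
    and edges: "\<And>e. e \<in> edges A \<Longrightarrow> f ` e \<in> edges B"
  shows "has_cycle B"
proof -
  obtain vs where vs: "length vs \<ge> 3" "distinct vs" "set vs \<subseteq> verts A"
    and cyc: "\<forall>i < length vs. {vs ! i, vs ! ((i + 1) mod length vs)} \<in> edges A"
    using \<open>has_cycle A\<close> unfolding has_cycle_def by blast
  have "{map f vs ! i, map f vs ! ((i + 1) mod length vs)} \<in> edges B" if "i < length vs" for i
  proof -
    have "(i + 1) mod length vs < length vs"
      using that by (intro mod_less_divisor) linarith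
    then show ?thesis
      using edges[OF cyc[rule_format, OF that]] that by simp
  qed
  moreover have "distinct (map f vs)"
    using vs(2,3) inj_on_subset[OF inj] by (simp add: distinct_map)
  ultimately show ?thesis
    unfolding has_cycle_def using vs(1,3) verts
    by (intro exI[of _ "map f vs"]) auto
qed

text \<open>\<open>B\<close> plays the role of the common boundary graph.\<close>

fun lift_auxv :: "'a graph \<Rightarrow> 'a graph \<Rightarrow> 'a graph \<Rightarrow> 'a auxv \<Rightarrow> 'a auxv" where
  "lift_auxv G H B (GComp C) = GComp (comp_in G C)"
| "lift_auxv G H B (HComp C) = HComp (comp_in H C)"
| "lift_auxv G H B (BComp C) = BComp (comp_in B C)"

lemma inj_on_lift_auxv:
  assumes "inj_on (comp_in G) X" "inj_on (comp_in H) Y" "inj_on (comp_in B) Z"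
  shows "inj_on (lift_auxv G H B) (GComp ` X \<union> HComp ` Y \<union> BComp ` Z)"
proof (rule inj_onI)
  fix a b assume "a \<in> GComp ` X \<union> HComp ` Y \<union> BComp ` Z" "b \<in> GComp ` X \<union> HComp ` Y \<union> BComp ` Z"
    and "lift_auxv G H B a = lift_auxv G H B b"
  then show "a = b"
    by (auto dest: inj_onD[OF assms(1)] inj_onD[OF assms(2)] inj_onD[OF assms(3)])
qed

lemma has_cycle_aux_sum_faithful:
  assumes G: "faithful_subgraph G' G" and H: "faithful_subgraph H' H"
    and B: "faithful_subgraph (induced G' S') (induced G S)"
    and HS: "induced H S = induced G S" and HS': "induced H' S' = induced G' S'"
    and "has_cycle (aux_sum G' H' S')"
  shows "has_cycle (aux_sum G H S)"
proof (rule has_cycle_inj_hom[OF \<open>has_cycle (aux_sum G' H' S')\<close>])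
  let ?B = "induced G S" and ?B' = "induced G' S'"
  let ?f = "lift_auxv G H ?B"
  have subG: "verts G' \<subseteq> verts G" "edges G' \<subseteq> edges G"
    and subH: "verts H' \<subseteq> verts H" "edges H' \<subseteq> edges H"
    and subB: "verts ?B' \<subseteq> verts ?B" "edges ?B' \<subseteq> edges ?B"
    using G H B by (simp_all add: faithful_subgraph_def)
  have BH: "verts ?B \<subseteq> verts H" "edges ?B \<subseteq> edges H"
    using induced_subset[of H S] HS by simp_all
  show "inj_on ?f (verts (aux_sum G' H' S'))"
    using inj_on_lift_auxv[OF inj_on_comp_in[OF G] inj_on_comp_in[OF H] inj_on_comp_in[OF B]]
    by (simp add: aux_sum_def)
  show "?f ` verts (aux_sum G' H' S') \<subseteq> verts (aux_sum G H S)"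
    using comp_in_comps[OF _ subG] comp_in_comps[OF _ subH] comp_in_comps[OF _ subB]
    by (auto simp: aux_sum_def)
  fix e assume "e \<in> edges (aux_sum G' H' S')"
  then consider
      C1 C2 where "e = {GComp C1, BComp C2}" "C1 \<in> comps G'" "C2 \<in> comps ?B'" "C2 \<subseteq> C1"
    | C1 C2 where "e = {HComp C1, BComp C2}" "C1 \<in> comps H'" "C2 \<in> comps ?B'" "C2 \<subseteq> C1"
    using HS' by (auto simp: aux_sum_def)
  then show "?f ` e \<in> edges (aux_sum G H S)"
  proof cases
    case (1 C1 C2)
    then have "comp_in ?B C2 \<subseteq> comp_in G C1"
      using comp_in_mono[OF _ subG _ subB induced_subset] by blast
    then show ?thesis
      using 1 comp_in_comps[OF _ subG] comp_in_comps[OF _ subB] by (auto simp: aux_sum_def)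
  next
    case (2 C1 C2)
    then have "comp_in ?B C2 \<subseteq> comp_in H C1"
      using comp_in_mono[OF _ subH _ subB BH] by blast
    then show ?thesis
      using 2 comp_in_comps[OF _ subH] comp_in_comps[OF _ subB] HS by (auto simp: aux_sum_def)
  qed
qed

theorem lemma3p6:
  fixes G H F :: "'a graph" and S :: "'a set" and lg lh :: "'a \<Rightarrow> nat" and d :: nat
  assumes "labeled_boundaried d G S lg"
    and "labeled_boundaried d H S lh"
    and "compatible G lg H lh S"
    and "\<not> has_cycle (aux_sum G H S)"
    and "S_block (gsum G H) S F"
  shows "\<not> has_cycle (aux_sum (ginter F G) (ginter F H) (S \<inter> verts F))"
proof
  assume cyc: "has_cycle (aux_sum (ginter F G) (ginter F H) (S \<inter> verts F))"
  let ?K = "gsum G H"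
  have wfK: "wf_graph ?K"
    using assms(1,2) by (simp add: labeled_boundaried_def wf_graph_gsum)
  have blk: "is_block ?K F"
    using assms(5) by (simp add: S_block_def)
  then have wfF: "wf_graph F"
    by (simp add: is_block_def subgraph_def)
  have HS: "induced H S = induced G S"
    using assms(3) by (simp add: compatible_def)
  have G_le: "edges G \<subseteq> edges ?K" and H_le: "edges H \<subseteq> edges ?K"
    by (auto simp: gsum_def)
  have faithful: "faithful_subgraph (ginter F G) G" "faithful_subgraph (ginter F H) H"
    "faithful_subgraph (induced (ginter F G) (S \<inter> verts F)) (induced G S)"
    using faithful_subgraph_block_inter[OF wfK blk] G_le H_le induced_subset(2)[of G S]
    by (auto simp: induced_ginter[OF wfF])
  have HS': "induced (ginter F H) (S \<inter> verts F) = induced (ginter F G) (S \<inter> verts F)"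
    using HS by (simp add: induced_ginter[OF wfF])
  have "has_cycle (aux_sum G H S)"
    by (rule has_cycle_aux_sum_faithful[OF faithful HS HS' cyc])
  with assms(4) show False ..
qed

end
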